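(* For every $d \geq 2$, let $N(d)$ be the maximum number of mutually unbiased bases in $\mathbb{C}^d$ and let \[ B(d) = \inf\Big\{ h(\bm I) : h \in C_{\succeq 0}(U(d)) \text{ real-valued},\; h(\bm H) \leq 0 \text{ for all } \bm H \in H(d),\; \textstyle\int h\, d\nu = 1\Big\}. \] Then $N(d) \leq B(d)$.
   Context: $U(d)$ is the unitary group with identity $\bm I$ and Haar probability measure $\nu$. Orthonormal bases of $\mathbb{C}^d$ are mutually unbiased if for any two distinct bases $\mathcal B,\mathcal B'$ in the collection and any $\bm v\in\mathcal B$, $\bm w\in\mathcal B'$, $|\langle \bm v,\bm w\rangle| = 1/\sqrt d$. $H(d)$ is the set of unitary $\bm H$ with $|H_{ij}| = 1/\sqrt d$ for all $i,j$. A continuous $f$ on a compact group $G$ is positive definite ($f \in C_{\succeq 0}(G)$) if $\sum_{i,j=1}^n \overline{c_i} f(g_i^{-1}g_j) c_j \geq 0$ for all $n$, all $g_i \in G$ and $c_i \in \mathbb{C}$. *)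

theory Defs
  imports "HOL-Probability.Probability"
begin

text \<open>Matrices in C^{d x d} are rendered as complex^'n^'n with d = CARD('n).\<close>

definition adj :: "complex^'n^'n \<Rightarrow> complex^'n^'n" where
  "adj A = (\<chi> i j. cnj (A $ j $ i))"

definition unitary_group :: "(complex^'n^'n) set" where
  "unitary_group = {U. adj U ** U = mat 1}"

definition hadamard_set :: "(complex^'n^'n) set" where
  "hadamard_set = {H \<in> unitary_group. \<forall>i j. cmod (H $ i $ j) = 1 / sqrt (real CARD('n))}"

definition cinner :: "complex^'n \<Rightarrow> complex^'n \<Rightarrow> complex" where
  "cinner v w = (\<Sum>i\<in>UNIV. cnj (v $ i) * w $ i)"

definition orthonormal_basis :: "(complex^'n) set \<Rightarrow> bool" where
  "orthonormal_basis B \<longleftrightarrow> finite B \<and> card B = CARD('n) \<and>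
     (\<forall>v\<in>B. \<forall>w\<in>B. cinner v w = (if v = w then 1 else 0))"

definition mutually_unbiased :: "(complex^'n) set set \<Rightarrow> bool" where
  "mutually_unbiased C \<longleftrightarrow> (\<forall>B\<in>C. orthonormal_basis B) \<and>
     (\<forall>B\<in>C. \<forall>B'\<in>C. B \<noteq> B' \<longrightarrow>
        (\<forall>v\<in>B. \<forall>w\<in>B'. cmod (cinner v w) = 1 / sqrt (real CARD('n))))"

definition max_mub :: "'n::finite itself \<Rightarrow> ereal" where
  "max_mub _ = Sup {ereal (real (card C)) | C :: (complex^'n) set set. finite C \<and> mutually_unbiased C}"

text \<open>Continuous positive definite functions on U(d) (values outside U(d) irrelevant).\<close>
definition pos_def_on_U :: "(complex^'n^'n \<Rightarrow> complex) \<Rightarrow> bool" where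
  "pos_def_on_U f \<longleftrightarrow> continuous_on unitary_group f \<and>
     (\<forall>(n::nat) (g :: nat \<Rightarrow> complex^'n^'n) (c :: nat \<Rightarrow> complex).
        (\<forall>i<n. g i \<in> unitary_group) \<longrightarrow>
        (let s = (\<Sum>i<n. \<Sum>j<n. cnj (c i) * f (adj (g i) ** g j) * c j)
         in Im s = 0 \<and> Re s \<ge> 0))"

definition haar_prob :: "(complex^'n^'n) measure \<Rightarrow> bool" where
  "haar_prob \<nu> \<longleftrightarrow> prob_space \<nu> \<and> sets \<nu> = sets borel \<and> emeasure \<nu> unitary_group = 1 \<and>
     (\<forall>g\<in>unitary_group. \<forall>A\<in>sets borel. emeasure \<nu> ((\<lambda>x. g ** x) -` A) = emeasure \<nu> A)"

definition B_bound :: "(complex^'n^'n) measure \<Rightarrow> ereal" where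
  "B_bound \<nu> = Inf {ereal (h (mat 1)) | h :: complex^'n^'n \<Rightarrow> real.
      pos_def_on_U (\<lambda>x. complex_of_real (h x)) \<and>
      (\<forall>H\<in>hadamard_set. h H \<le> 0) \<and> integral\<^sup>L \<nu> h = 1}"

end

theory Submission
  imports Defs
begin

text \<open>Write the bases of a family of \<open>N\<close> mutually unbiased bases as the columns of unitary
  matrices \<open>U\<^sub>1, \<dots>, U\<^sub>N\<close>; then \<open>U\<^sub>k\<^sup>* U\<^sub>l\<close> is a complex Hadamard matrix whenever \<open>k \<noteq> l\<close>.
  For an admissible \<open>h\<close> the sum \<open>\<Sum>\<^sub>k\<^sub>,\<^sub>l h(U\<^sub>k\<^sup>* U\<^sub>l)\<close> is therefore at most \<open>N h(I)\<close>, its diagonal.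
  Conversely, for any positive definite \<open>h\<close>, points \<open>a\<^sub>i\<close> and real weights \<open>w\<^sub>i\<close> one has
  \<open>\<Sum>\<^sub>i\<^sub>,\<^sub>j w\<^sub>i w\<^sub>j h(a\<^sub>i\<^sup>* a\<^sub>j) \<ge> (\<Sum>\<^sub>i w\<^sub>i)\<^sup>2 \<integral>h d\<nu>\<close>: adjoin \<open>M\<close> further points \<open>y\<^sub>1, \<dots>, y\<^sub>M\<close> of
  weight \<open>-s\<close>, apply positive definiteness and integrate the \<open>y\<^sub>k\<close> out one at a time against the
  invariant measure \<open>\<nu>\<close>; with \<open>s = (\<Sum>\<^sub>i w\<^sub>i)/M\<close> the error is \<open>O(1/M)\<close>. With \<open>\<integral>h d\<nu> = 1\<close> this gives
  \<open>N\<^sup>2 \<le> N h(I)\<close>.\<close>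

lemma adj_adj [simp]: "adj (adj A) = A"
  by (simp add: adj_def vec_eq_iff)

lemma adj_matrix_mul: "adj (A ** B) = adj B ** adj A"
  by (simp add: adj_def vec_eq_iff matrix_matrix_mult_def mult.commute)

lemma adj_mat_1 [simp]: "adj (mat 1) = mat 1"
  by (simp add: adj_def vec_eq_iff mat_def)

lemma unitary_group_iff: "U \<in> unitary_group \<longleftrightarrow> adj U ** U = mat 1"
  by (simp add: unitary_group_def)

lemma unitary_mat_1 [simp]: "mat 1 \<in> unitary_group"
  by (simp add: unitary_group_iff)

lemma unitary_mult_adj: "U \<in> unitary_group \<Longrightarrow> U ** adj U = mat 1"
  unfolding unitary_group_iff using matrix_left_right_inverse by blast

lemma unitary_matrix_mul:
  assumes "A \<in> unitary_group" "B \<in> unitary_group"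
  shows "A ** B \<in> unitary_group"
proof -
  have "adj (A ** B) ** (A ** B) = adj B ** (adj A ** A) ** B"
    by (simp add: adj_matrix_mul matrix_mul_assoc)
  also have "\<dots> = mat 1"
    using assms by (simp add: unitary_group_iff)
  finally show ?thesis
    by (simp add: unitary_group_iff)
qed

lemma unitary_adj: "U \<in> unitary_group \<Longrightarrow> adj U \<in> unitary_group"
  using unitary_mult_adj by (simp add: unitary_group_iff)

lemma unitary_adj_mult: "A \<in> unitary_group \<Longrightarrow> B \<in> unitary_group \<Longrightarrow> adj A ** B \<in> unitary_group"
  by (intro unitary_matrix_mul unitary_adj)

lemma borel_measurable_matrix_mul_left:
  "(\<lambda>x::'a::real_normed_field^'n^'m. g ** x) \<in> borel_measurable borel"
  unfolding matrix_matrix_mult_def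
  by (intro borel_measurable_continuous_onI continuous_intros)

lemma haar_prob_space: "haar_prob \<nu> \<Longrightarrow> prob_space \<nu>"
  by (simp add: haar_prob_def)

lemma haar_sets: "haar_prob \<nu> \<Longrightarrow> sets \<nu> = sets borel"
  by (simp add: haar_prob_def)

lemma haar_AE_unitary: "haar_prob \<nu> \<Longrightarrow> AE x in \<nu>. x \<in> unitary_group"
  by (intro prob_space.AE_prob_1 haar_prob_space) (simp_all add: haar_prob_def measure_def)

lemma haar_distr_left_mult:
  assumes "haar_prob \<nu>" "g \<in> unitary_group"
  shows "distr \<nu> borel (\<lambda>x. g ** x) = \<nu>"
proof (rule measure_eqI)
  have "space \<nu> = UNIV"
    using sets_eq_imp_space_eq[OF haar_sets[OF assms(1)]] by simp
  moreover have "(\<lambda>x. g ** x) \<in> measurable \<nu> borel"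
    using borel_measurable_matrix_mul_left measurable_cong_sets[OF haar_sets[OF assms(1)] refl]
    by blast
  ultimately show "emeasure (distr \<nu> borel (\<lambda>x. g ** x)) A = emeasure \<nu> A"
    if "A \<in> sets (distr \<nu> borel (\<lambda>x. g ** x))" for A
    using that assms by (simp add: emeasure_distr haar_prob_def)
qed (simp add: haar_sets[OF assms(1)])

lemma haar_integral_left_mult:
  fixes h :: "complex^'n^'n \<Rightarrow> real"
  assumes "haar_prob \<nu>" "g \<in> unitary_group" "integrable \<nu> h"
  shows "integrable \<nu> (\<lambda>x. h (g ** x))" "(\<integral>x. h (g ** x) \<partial>\<nu>) = integral\<^sup>L \<nu> h"
proof -
  have sets: "sets \<nu> = sets borel"
    using haar_sets[OF assms(1)] .
  have mult: "(\<lambda>x. g ** x) \<in> measurable \<nu> borel"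
    using borel_measurable_matrix_mul_left measurable_cong_sets[OF sets refl] by blast
  have h: "h \<in> borel_measurable borel"
    using assms(3) measurable_cong_sets[OF sets refl] by auto
  show "integrable \<nu> (\<lambda>x. h (g ** x))"
    using integrable_distr_eq[OF mult h] haar_distr_left_mult[OF assms(1,2)] assms(3) by simp
  show "(\<integral>x. h (g ** x) \<partial>\<nu>) = integral\<^sup>L \<nu> h"
    using integral_distr[OF mult h] haar_distr_left_mult[OF assms(1,2)] by simp
qed

definition quad_form :: "(complex^'n^'n \<Rightarrow> real) \<Rightarrow> nat \<Rightarrow> (nat \<Rightarrow> complex^'n^'n) \<Rightarrow> (nat \<Rightarrow> real) \<Rightarrow> real"
  where "quad_form h n a w = (\<Sum>i<n. \<Sum>j<n. w i * w j * h (adj (a i) ** a j))"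

lemma pos_def_on_UD:
  fixes n :: nat
  assumes "pos_def_on_U f" "\<forall>i<n. g i \<in> unitary_group"
  shows "Im (\<Sum>i<n. \<Sum>j<n. cnj (c i) * f (adj (g i) ** g j) * c j) = 0"
    and "0 \<le> Re (\<Sum>i<n. \<Sum>j<n. cnj (c i) * f (adj (g i) ** g j) * c j)"
  using assms unfolding pos_def_on_U_def Let_def by blast+

lemma quad_form_nonneg:
  assumes "pos_def_on_U (\<lambda>x. complex_of_real (h x))" "\<forall>i<n. a i \<in> unitary_group"
  shows "0 \<le> quad_form h n a w"
proof -
  have "0 \<le> Re (\<Sum>i<n. \<Sum>j<n. cnj (complex_of_real (w i)) * complex_of_real (h (adj (a i) ** a j))
      * complex_of_real (w j))"
    by (rule pos_def_on_UD(2)[OF assms])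
  then show ?thesis
    by (simp add: quad_form_def mult_ac)
qed

lemma pos_def_on_U_adj:
  assumes "pos_def_on_U (\<lambda>x. complex_of_real (h x))" "g \<in> unitary_group"
  shows "h (adj g) = h g"
proof -
  define a where "a i = (if i = 0 then mat 1 else g)" for i :: nat
  define c where "c i = (if i = 0 then 1 else \<i>)" for i :: nat
  have "\<forall>i<2. a i \<in> unitary_group"
    using assms(2) by (simp add: a_def)
  then have "Im (\<Sum>i<2. \<Sum>j<2. cnj (c i) * complex_of_real (h (adj (a i) ** a j)) * c j) = 0"
    by (rule pos_def_on_UD(1)[OF assms(1)])
  \<comment> \<open>this imaginary part is \<open>h g - h (adj g)\<close>\<close>
  moreover have "(\<Sum>i<2. \<Sum>j<2. F i j) = F 0 0 + F 0 1 + F 1 0 + F 1 1" for F :: "nat \<Rightarrow> nat \<Rightarrow> complex"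
    by (simp add: numeral_2_eq_2)
  ultimately show ?thesis
    by (simp add: a_def c_def)
qed

lemma quad_form_adjoin:
  assumes pd: "pos_def_on_U (\<lambda>x. complex_of_real (h x))"
    and a: "\<forall>i<n. a i \<in> unitary_group" and y: "y \<in> unitary_group"
  shows "quad_form h (Suc n) (a(n := y)) (w(n := - s))
    = quad_form h n a w - 2 * s * (\<Sum>i<n. w i * h (adj (a i) ** y)) + s\<^sup>2 * h (mat 1)"
proof -
  let ?a = "a(n := y)" and ?w = "w(n := - s)"
  have "quad_form h (Suc n) ?a ?w = quad_form h n ?a ?w
      + (\<Sum>i<n. ?w i * ?w n * h (adj (?a i) ** ?a n))
      + (\<Sum>j<n. ?w n * ?w j * h (adj (?a n) ** ?a j)) + ?w n * ?w n * h (adj (?a n) ** ?a n)"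
    unfolding quad_form_def by (simp only: sum.lessThan_Suc sum.distrib add.assoc)
  also have "quad_form h n ?a ?w = quad_form h n a w"
    unfolding quad_form_def by (intro sum.cong) auto
  also have "(\<Sum>i<n. ?w i * ?w n * h (adj (?a i) ** ?a n)) = - s * (\<Sum>i<n. w i * h (adj (a i) ** y))"
    by (simp add: sum_distrib_left mult_ac)
  also have "(\<Sum>j<n. ?w n * ?w j * h (adj (?a n) ** ?a j)) = - s * (\<Sum>i<n. w i * h (adj (a i) ** y))"
  proof -
    have "h (adj y ** a i) = h (adj (a i) ** y)" if "i < n" for i
      using pos_def_on_U_adj[OF pd unitary_adj_mult[of "a i" y]] that a y
      by (simp add: adj_matrix_mul)
    then show ?thesis
      by (simp add: sum_distrib_left mult_ac)
  qed
  also have "?w n * ?w n * h (adj (?a n) ** ?a n) = s\<^sup>2 * h (mat 1)"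
    using y by (simp add: unitary_group_iff power2_eq_square)
  finally show ?thesis
    by linarith
qed

lemma haar_integral_translates:
  fixes h :: "complex^'n^'n \<Rightarrow> real"
  assumes haar: "haar_prob \<nu>" and h: "integrable \<nu> h" and a: "\<forall>i<n. a i \<in> unitary_group"
  shows "integrable \<nu> (\<lambda>y. \<Sum>i<n. w i * h (adj (a i) ** y))"
    and "(\<integral>y. (\<Sum>i<n. w i * h (adj (a i) ** y)) \<partial>\<nu>) = (\<Sum>i<n. w i) * integral\<^sup>L \<nu> h"
  using haar_integral_left_mult[OF haar unitary_adj h] a
  by (auto simp: sum_distrib_right)

text \<open>The right-hand side is what positive definiteness gives after adjoining \<open>M\<close> points of
  weight \<open>-s\<close> to the \<open>a\<^sub>i\<close> and integrating each of them out against \<open>\<nu>\<close>.\<close>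

lemma quad_form_averaged_points:
  fixes h :: "complex^'n^'n \<Rightarrow> real" and M :: nat
  assumes haar: "haar_prob \<nu>" and pd: "pos_def_on_U (\<lambda>x. complex_of_real (h x))"
    and h: "integrable \<nu> h" and a: "\<forall>i<n. a i \<in> unitary_group"
  shows "0 \<le> quad_form h n a w - 2 * s * real M * integral\<^sup>L \<nu> h * (\<Sum>i<n. w i)
    + s\<^sup>2 * (real M * h (mat 1) + real M * (real M - 1) * integral\<^sup>L \<nu> h)"
  using a
proof (induction M arbitrary: n a w)
  case 0
  then show ?case
    using quad_form_nonneg[OF pd] by simp
next
  case (Suc M)
  interpret prob_space \<nu>
    using haar by (rule haar_prob_space)
  let ?c = "integral\<^sup>L \<nu> h" and ?S = "\<lambda>y. \<Sum>i<n. w i * h (adj (a i) ** y)"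
  define K where "K = quad_form h n a w + s\<^sup>2 * h (mat 1) - 2 * s * real M * ?c * ((\<Sum>i<n. w i) - s)
    + s\<^sup>2 * (real M * h (mat 1) + real M * (real M - 1) * ?c)"
  have "0 \<le> K - 2 * s * ?S y" if y: "y \<in> unitary_group" for y
  proof -
    have "\<forall>i<Suc n. (a(n := y)) i \<in> unitary_group"
      using Suc.prems y by (simp add: less_Suc_eq)
    from Suc.IH[OF this, of "w(n := - s)"] show ?thesis
      unfolding quad_form_adjoin[OF pd Suc.prems y] K_def by simp
  qed
  then have "0 \<le> (\<integral>y. K - 2 * s * ?S y \<partial>\<nu>)"
    using haar_AE_unitary[OF haar] by (intro integral_nonneg_AE) (auto elim: AE_mp)
  also have "\<dots> = K - 2 * s * (\<Sum>i<n. w i) * ?c"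
    using haar_integral_translates[OF haar h Suc.prems] by (simp add: prob_space)
  finally show ?case
    unfolding K_def by (simp add: algebra_simps power2_eq_square)
qed

theorem quad_form_ge_integral:
  fixes h :: "complex^'n^'n \<Rightarrow> real"
  assumes haar: "haar_prob \<nu>" and pd: "pos_def_on_U (\<lambda>x. complex_of_real (h x))"
    and h: "integrable \<nu> h" and a: "\<forall>i<n. a i \<in> unitary_group"
  shows "(\<Sum>i<n. w i)\<^sup>2 * integral\<^sup>L \<nu> h \<le> quad_form h n a w"
proof -
  let ?W = "\<Sum>i<n. w i" and ?c = "integral\<^sup>L \<nu> h" and ?Q = "quad_form h n a w"
  have "0 \<le> ?Q - ?W\<^sup>2 * ?c + ?W\<^sup>2 * (h (mat 1) - ?c) / real M" if "M \<ge> 1" for M :: nat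
  proof -
    have "0 \<le> ?Q - 2 * (?W / real M) * real M * ?c * ?W
      + (?W / real M)\<^sup>2 * (real M * h (mat 1) + real M * (real M - 1) * ?c)"
      by (rule quad_form_averaged_points[OF haar pd h a])
    also have "\<dots> = ?Q - ?W\<^sup>2 * ?c + ?W\<^sup>2 * (h (mat 1) - ?c) / real M"
      using that by (simp add: field_simps power2_eq_square)
    finally show ?thesis .
  qed
  moreover have "(\<lambda>M. ?Q - ?W\<^sup>2 * ?c + ?W\<^sup>2 * (h (mat 1) - ?c) / real M) \<longlonglongrightarrow> ?Q - ?W\<^sup>2 * ?c"
    using tendsto_add[OF tendsto_const lim_const_over_n] by simp
  ultimately have "0 \<le> ?Q - ?W\<^sup>2 * ?c"
    by (intro LIMSEQ_le_const) auto
  then show ?thesis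
    by simp
qed

definition basis_enum :: "(complex^'n) set \<Rightarrow> 'n \<Rightarrow> complex^'n"
  where "basis_enum B = (SOME f. bij_betw f UNIV B)"

definition basis_matrix :: "(complex^'n) set \<Rightarrow> complex^'n^'n"
  where "basis_matrix B = (\<chi> r i. basis_enum B i $ r)"

lemma bij_betw_basis_enum:
  fixes B :: "(complex^'n) set"
  assumes "orthonormal_basis B"
  shows "bij_betw (basis_enum B) UNIV B"
proof -
  have "\<exists>f. bij_betw f (UNIV :: 'n set) B"
    using assms by (intro finite_same_card_bij) (auto simp: orthonormal_basis_def)
  then show ?thesis
    unfolding basis_enum_def by (rule someI_ex)
qed

lemma adj_basis_matrix_mult_nth:
  "(adj (basis_matrix B) ** basis_matrix B') $ i $ j = cinner (basis_enum B i) (basis_enum B' j)"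
  by (simp add: adj_def basis_matrix_def matrix_matrix_mult_def cinner_def)

lemma basis_matrix_unitary:
  assumes "orthonormal_basis B"
  shows "basis_matrix B \<in> unitary_group"
proof -
  have bij: "bij_betw (basis_enum B) UNIV B"
    using bij_betw_basis_enum[OF assms] .
  have "cinner (basis_enum B i) (basis_enum B j) = mat 1 $ i $ j" for i j
  proof -
    have "basis_enum B i \<in> B" "basis_enum B j \<in> B" "basis_enum B i = basis_enum B j \<longleftrightarrow> i = j"
      using bij by (auto simp: bij_betw_def inj_on_def)
    moreover have "\<forall>v\<in>B. \<forall>w\<in>B. cinner v w = (if v = w then 1 else 0)"
      using assms by (simp add: orthonormal_basis_def)
    ultimately show ?thesis
      by (simp add: mat_def)
  qed
  then show ?thesis
    by (simp add: unitary_group_iff vec_eq_iff adj_basis_matrix_mult_nth)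
qed

lemma basis_matrix_unbiased_hadamard:
  fixes C :: "(complex^'n) set set"
  assumes "mutually_unbiased C" "B \<in> C" "B' \<in> C" "B \<noteq> B'"
  shows "adj (basis_matrix B) ** basis_matrix B' \<in> hadamard_set"
proof -
  have onb: "orthonormal_basis B" "orthonormal_basis B'"
    using assms by (auto simp: mutually_unbiased_def)
  have "cmod (cinner (basis_enum B i) (basis_enum B' j)) = 1 / sqrt (real CARD('n))" for i j
  proof -
    have "basis_enum B i \<in> B" "basis_enum B' j \<in> B'"
      using bij_betw_basis_enum[OF onb(1)] bij_betw_basis_enum[OF onb(2)] by (auto simp: bij_betw_def)
    with assms show ?thesis
      unfolding mutually_unbiased_def by blast
  qed
  moreover have "adj (basis_matrix B) ** basis_matrix B' \<in> unitary_group"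
    using onb by (intro unitary_adj_mult basis_matrix_unitary)
  ultimately show ?thesis
    by (simp add: hadamard_set_def adj_basis_matrix_mult_nth)
qed

lemma card_mutually_unbiased_le:
  fixes C :: "(complex^'n) set set" and h :: "complex^'n^'n \<Rightarrow> real"
  assumes haar: "haar_prob \<nu>" and pd: "pos_def_on_U (\<lambda>x. complex_of_real (h x))"
    and hadamard: "\<forall>H\<in>hadamard_set. h H \<le> 0" and integral: "integral\<^sup>L \<nu> h = 1"
    and "finite C" and mub: "mutually_unbiased C"
  shows "real (card C) \<le> h (mat 1)"
proof -
  let ?N = "card C"
  obtain e where e: "bij_betw e {..<?N} C"
    using ex_bij_betw_nat_finite[OF \<open>finite C\<close>] by (auto simp: lessThan_atLeast0)
  define U where "U k = basis_matrix (e k)" for k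
  have eC: "e k \<in> C" if "k < ?N" for k
    using e that by (auto simp: bij_betw_def)
  have U: "\<forall>k<?N. U k \<in> unitary_group"
    using eC mub by (auto simp: U_def mutually_unbiased_def intro: basis_matrix_unitary)
  have "integrable \<nu> h"
    using integral not_integrable_integral_eq by fastforce
  then have "real ?N ^ 2 \<le> quad_form h ?N U (\<lambda>_. 1)"
    using quad_form_ge_integral[OF haar pd _ U, of "\<lambda>_. 1"] integral by simp
  also have "\<dots> \<le> (\<Sum>k<?N. \<Sum>l<?N. if k = l then h (mat 1) else 0)"
    unfolding quad_form_def
  proof (intro sum_mono)
    fix k l assume "k \<in> {..<?N}" "l \<in> {..<?N}"
    moreover have "e k \<noteq> e l" if "k \<noteq> l"
      using e that \<open>k \<in> {..<?N}\<close> \<open>l \<in> {..<?N}\<close> by (auto simp: bij_betw_def inj_on_def)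
    ultimately show "1 * 1 * h (adj (U k) ** U l) \<le> (if k = l then h (mat 1) else 0)"
      using U hadamard basis_matrix_unbiased_hadamard[OF mub eC eC]
      by (auto simp: U_def unitary_group_iff)
  qed
  also have "\<dots> = real ?N * h (mat 1)"
    by simp
  finally have "real ?N * real ?N \<le> real ?N * h (mat 1)"
    by (simp add: power2_eq_square)
  moreover have "0 \<le> h (mat 1)"
    using quad_form_nonneg[OF pd, of 1 "\<lambda>_. mat 1" "\<lambda>_. 1"] by (simp add: quad_form_def)
  ultimately show ?thesis
    by (cases "?N = 0") auto
qed

theorem corollary1p9:
  fixes \<nu> :: "(complex^'n^'n) measure"
  assumes "CARD('n) \<ge> 2"
    and "haar_prob \<nu>"
  shows "max_mub TYPE('n) \<le> B_bound \<nu>"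
  unfolding max_mub_def B_bound_def
  using card_mutually_unbiased_le[OF assms(2)] by (auto intro!: Sup_least Inf_greatest)

end
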